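(* Every pairwise social choice correspondence that satisfies strategyproofness, non-imposition, homogeneity, and neutrality is strongly Condorcet-consistent.
   Context: Let $A$ be a finite set of alternatives; a preference profile $R$ assigns a strict total order $\succ_i$ on $A$ to each voter $i$ of a finite non-empty electorate $N\subseteq\{1,2,\dots\}$; $\mathcal{R}^*(A)$ is the set of all profiles over all electorates. $g_R(x,y)=|\{i: x\succ_i y\}|-|\{i: y\succ_i x\}|$; $x\succ_R y$ iff $g_R(x,y)>0$. A Condorcet winner is $x$ with $x\succ_R y$ for all $y\ne x$. An SCC is $f:\mathcal{R}^*(A)\to 2^A\setminus\{\emptyset\}$; pairwise: $f(R)=f(R')$ whenever $g_R=g_{R'}$; non-imposing: for every $x\in A$ some profile has $f(R)=\{x\}$; neutral: for profiles $R,R'$ on the same electorate and a permutation $\pi$ of $A$ with $x\succ_i y\iff\pi(x)\succ'_i\pi(y)$ for all $x,y,i$, $f(R')=\pi(f(R))$; homogeneous: $f(kR)=f(R)$ for $k$ copies $kR$ of $R$; strongly Condorcet-consistent: $f(R)=\{x\}$ iff $x$ is the Condorcet winner in $R$. Fishburn's extension: for $X\ne Y$, $X\succ_i^F Y$ iff $x\succ_i y$ for all $x\in X\setminus Y,y\in Y$ and for all $x\in X,y\in Y\setminus X$; $f$ is strategyproof if no voter $i$ can change only his own preference to move from $R$ to $R'$ with $f(R')\succ_i^F f(R)$. *)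

theory Defs
  imports Main
begin

text \<open>A preference profile over alternatives A is a partial map from voters (positive
naturals) to preference relations; its domain is the (finite, non-empty) electorate.
A pair (x,y) in the relation of voter i means x \<succ>_i y.\<close>

type_synonym 'a profile = "nat \<Rightarrow> ('a \<times> 'a) set option"

definition strict_total_order :: "'a set \<Rightarrow> ('a \<times> 'a) set \<Rightarrow> bool" where
  "strict_total_order A r \<longleftrightarrow> r \<subseteq> A \<times> A \<and> irrefl r \<and> trans r \<and>
     (\<forall>x\<in>A. \<forall>y\<in>A. x \<noteq> y \<longrightarrow> (x, y) \<in> r \<or> (y, x) \<in> r)"

definition is_profile :: "'a set \<Rightarrow> 'a profile \<Rightarrow> bool" where
  "is_profile A R \<longleftrightarrow> finite (dom R) \<and> dom R \<noteq> {} \<and> 0 \<notin> dom R \<and>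
     (\<forall>i\<in>dom R. strict_total_order A (the (R i)))"

definition prefers :: "'a profile \<Rightarrow> nat \<Rightarrow> 'a \<Rightarrow> 'a \<Rightarrow> bool" where
  "prefers R i x y \<longleftrightarrow> i \<in> dom R \<and> (x, y) \<in> the (R i)"

definition margin :: "'a profile \<Rightarrow> 'a \<Rightarrow> 'a \<Rightarrow> int" where
  "margin R x y = int (card {i. prefers R i x y}) - int (card {i. prefers R i y x})"

definition condorcet_winner :: "'a set \<Rightarrow> 'a profile \<Rightarrow> 'a \<Rightarrow> bool" where
  "condorcet_winner A R x \<longleftrightarrow> x \<in> A \<and> (\<forall>y\<in>A. y \<noteq> x \<longrightarrow> margin R x y > 0)"

definition is_scc :: "'a set \<Rightarrow> ('a profile \<Rightarrow> 'a set) \<Rightarrow> bool" where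
  "is_scc A f \<longleftrightarrow> (\<forall>R. is_profile A R \<longrightarrow> f R \<noteq> {} \<and> f R \<subseteq> A)"

definition pairwise_scc :: "'a set \<Rightarrow> ('a profile \<Rightarrow> 'a set) \<Rightarrow> bool" where
  "pairwise_scc A f \<longleftrightarrow> (\<forall>R R'. is_profile A R \<longrightarrow> is_profile A R' \<longrightarrow>
     margin R = margin R' \<longrightarrow> f R = f R')"

definition non_imposing :: "'a set \<Rightarrow> ('a profile \<Rightarrow> 'a set) \<Rightarrow> bool" where
  "non_imposing A f \<longleftrightarrow> (\<forall>x\<in>A. \<exists>R. is_profile A R \<and> f R = {x})"

definition neutral :: "'a set \<Rightarrow> ('a profile \<Rightarrow> 'a set) \<Rightarrow> bool" where
  "neutral A f \<longleftrightarrow> (\<forall>R R' \<pi>. is_profile A R \<longrightarrow> is_profile A R' \<longrightarrow> dom R = dom R' \<longrightarrow>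
     bij_betw \<pi> A A \<longrightarrow>
     (\<forall>i\<in>dom R. \<forall>x\<in>A. \<forall>y\<in>A. prefers R i x y \<longleftrightarrow> prefers R' i (\<pi> x) (\<pi> y)) \<longrightarrow>
     f R' = \<pi> ` f R)"

definition copies :: "nat \<Rightarrow> 'a profile \<Rightarrow> 'a profile \<Rightarrow> bool" where
  "copies k R R' \<longleftrightarrow> (\<exists>h. (\<forall>j\<in>dom R'. h j \<in> dom R \<and> R' j = R (h j)) \<and>
     (\<forall>i\<in>dom R. card {j\<in>dom R'. h j = i} = k))"

definition homogeneous :: "'a set \<Rightarrow> ('a profile \<Rightarrow> 'a set) \<Rightarrow> bool" where
  "homogeneous A f \<longleftrightarrow> (\<forall>k R R'. k \<ge> 1 \<longrightarrow> is_profile A R \<longrightarrow> is_profile A R' \<longrightarrow>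
     copies k R R' \<longrightarrow> f R' = f R)"

definition strongly_condorcet_consistent :: "'a set \<Rightarrow> ('a profile \<Rightarrow> 'a set) \<Rightarrow> bool" where
  "strongly_condorcet_consistent A f \<longleftrightarrow> (\<forall>R x. is_profile A R \<longrightarrow>
     (f R = {x} \<longleftrightarrow> condorcet_winner A R x))"

definition fishburn :: "'a profile \<Rightarrow> nat \<Rightarrow> 'a set \<Rightarrow> 'a set \<Rightarrow> bool" where
  "fishburn R i X Y \<longleftrightarrow> X \<noteq> Y \<and> (\<forall>x\<in>X - Y. \<forall>y\<in>Y. prefers R i x y) \<and>
     (\<forall>x\<in>X. \<forall>y\<in>Y - X. prefers R i x y)"

definition strategyproof :: "'a set \<Rightarrow> ('a profile \<Rightarrow> 'a set) \<Rightarrow> bool" where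
  "strategyproof A f \<longleftrightarrow> (\<forall>R R' i. is_profile A R \<longrightarrow> is_profile A R' \<longrightarrow> i \<in> dom R \<longrightarrow>
     dom R' = dom R \<longrightarrow> (\<forall>j. j \<noteq> i \<longrightarrow> R' j = R j) \<longrightarrow> \<not> fishburn R i (f R') (f R))"

end

theory Submission
  imports Defs "HOL-Combinatorics.Transposition"
begin

text \<open>
  By pairwiseness only the margins matter, and a ballot
  together with its reverse changes no margin. By strategyproofness a singleton choice \<open>{x}\<close>
  survives every change of a ballot that ranks \<open>x\<close> last, and every change to a ballot that
  ranks \<open>x\<close> first. Adding cancelling pairs of ballots with \<open>x\<close> near the bottom and then lifting
  \<open>x\<close> over a block of alternatives raises the margins of \<open>x\<close> (its row of the margin matrix) by
  arbitrary even amounts; exchanging ballots that rank \<open>x\<close> last replaces all margins not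
  involving \<open>x\<close>. Hence, for a fixed number of voters, whether \<open>{x}\<close> is chosen depends only on
  the row of \<open>x\<close>.

  The row of a Condorcet winner \<open>x\<close> is reached from a profile in which every voter ranks \<open>x\<close>
  first; there \<open>{x}\<close> is chosen, because after replication to equal size any profile choosing
  \<open>{x}\<close> (non-imposition, homogeneity) turns into it ballot by ballot. Conversely, if \<open>{x}\<close> is
  chosen but \<open>x\<close> does not beat \<open>y\<close>, doubling the profile and raising the margin of \<open>x\<close>
  against \<open>y\<close> yields a tie between them; grafting onto it the ballots with \<open>x\<close> and \<open>y\<close>
  transposed gives a profile whose row of \<open>x\<close> is unchanged by that transposition, so that \<open>x\<close>
  and, by neutrality, also \<open>y\<close> would be the unique choice.
\<close>

section \<open>Profiles as lists of ballots\<close>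

definition ballot_margin :: "('a \<times> 'a) set \<Rightarrow> 'a \<Rightarrow> 'a \<Rightarrow> int" where
  "ballot_margin r a b = of_bool ((a, b) \<in> r) - of_bool ((b, a) \<in> r)"

definition list_margin :: "('a \<times> 'a) set list \<Rightarrow> 'a \<Rightarrow> 'a \<Rightarrow> int" where
  "list_margin rs a b = (\<Sum>r\<leftarrow>rs. ballot_margin r a b)"

definition list_profile :: "('a \<times> 'a) set list \<Rightarrow> 'a profile" where
  "list_profile rs i = (if 1 \<le> i \<and> i \<le> length rs then Some (rs ! (i - 1)) else None)"

definition ballot_list :: "'a set \<Rightarrow> ('a \<times> 'a) set list \<Rightarrow> bool" where
  "ballot_list A rs \<longleftrightarrow> rs \<noteq> [] \<and> (\<forall>r\<in>set rs. strict_total_order A r)"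

lemma list_margin_Nil [simp]: "list_margin [] a b = 0"
  by (simp add: list_margin_def)

lemma list_margin_Cons [simp]: "list_margin (r # rs) a b = ballot_margin r a b + list_margin rs a b"
  by (simp add: list_margin_def)

lemma list_margin_append [simp]: "list_margin (rs @ qs) a b = list_margin rs a b + list_margin qs a b"
  by (simp add: list_margin_def)

lemma list_margin_commute: "list_margin rs b a = - list_margin rs a b"
  by (induction rs) (auto simp: ballot_margin_def)

lemma list_margin_self [simp]: "list_margin rs a a = 0"
  by (induction rs) (auto simp: ballot_margin_def)

lemma ballot_margin_converse [simp]: "ballot_margin (r\<inverse>) a b = - ballot_margin r a b"
  by (simp add: ballot_margin_def)

lemma list_margin_map_converse [simp]:
  "list_margin (map (\<lambda>r. (g r)\<inverse>) rs) a b = - list_margin (map g rs) a b"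
  by (induction rs) auto

lemma list_margin_replicate: "list_margin (replicate k r) a b = int k * ballot_margin r a b"
  by (induction k) (auto simp: algebra_simps)

lemma list_margin_concat_replicate:
  "list_margin (concat (replicate k rs)) a b = int k * list_margin rs a b"
  by (induction k) (auto simp: algebra_simps)

lemma list_margin_map_upt: "list_margin (map g [0..<M]) a b = (\<Sum>l<M. ballot_margin (g l) a b)"
  by (induction M) auto

lemma margin_eq_sum:
  assumes "finite (dom R)"
  shows "margin R a b = (\<Sum>i\<in>dom R. ballot_margin (the (R i)) a b)"
proof -
  have "{i. prefers R i u v} = dom R \<inter> {i. (u, v) \<in> the (R i)}" for u v
    by (auto simp: prefers_def)
  then show ?thesis
    using assms by (simp add: margin_def ballot_margin_def sum_subtractf)
qed

lemma dom_list_profile: "dom (list_profile rs) = {1..length rs}"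
  by (auto simp: list_profile_def split: if_splits)

lemma margin_list_profile: "margin (list_profile rs) a b = list_margin rs a b"
proof -
  have "margin (list_profile rs) a b = (\<Sum>i\<in>Suc ` {..<length rs}. ballot_margin (rs ! (i - 1)) a b)"
    by (simp add: margin_eq_sum dom_list_profile list_profile_def image_Suc_lessThan)
  also have "\<dots> = (\<Sum>i<length rs. ballot_margin (rs ! i) a b)"
    by (simp add: sum.reindex)
  finally show ?thesis
    by (simp add: list_margin_def sum_list_sum_nth atLeast0LessThan)
qed

lemma margin_eq_list_margin:
  assumes "finite (dom R)"
  shows "margin R a b = list_margin (map (the \<circ> R) (sorted_list_of_set (dom R))) a b"
  using assms by (simp add: margin_eq_sum list_margin_def sum_list_distinct_conv_sum_set)

lemma is_profile_list_profile: "ballot_list A rs \<Longrightarrow> is_profile A (list_profile rs)"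
  by (auto simp: is_profile_def ballot_list_def dom_list_profile list_profile_def Suc_le_eq)

lemma list_profile_map: "list_profile (map g rs) i = map_option g (list_profile rs i)"
  by (auto simp: list_profile_def)

definition profile_copies :: "nat \<Rightarrow> 'a profile \<Rightarrow> 'a profile" where
  "profile_copies k R j = R (j div k)"

lemma dom_profile_copies: "dom (profile_copies k R) = {j. j div k \<in> dom R}"
  by (auto simp: profile_copies_def)

lemma card_div_eq:
  assumes "0 < (k::nat)"
  shows "card {j. j div k = i} = k"
proof -
  have "{j. j div k = i} = {i * k..<i * k + k}"
  proof (intro set_eqI iffI)
    fix j assume "j \<in> {j. j div k = i}"
    then show "j \<in> {i * k..<i * k + k}"
      using assms dividend_less_div_times[of k j] div_times_less_eq_dividend[of j k] by auto
  next
    fix j assume "j \<in> {i * k..<i * k + k}"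
    then show "j \<in> {j. j div k = i}"
      by (auto intro: div_nat_eqI simp: mult.commute)
  qed
  then show ?thesis by simp
qed

lemma finite_dom_profile_copies:
  assumes "0 < k" and "finite (dom R)"
  shows "finite (dom (profile_copies k R))"
proof -
  obtain N where "\<forall>i\<in>dom R. i < N"
    using assms(2) finite_nat_set_iff_bounded by blast
  then have "j < N * k" if "j \<in> dom (profile_copies k R)" for j
    using that div_less_iff_less_mult[OF assms(1)] by (auto simp: dom_profile_copies)
  then show ?thesis
    using finite_subset[of _ "{..<N * k}"] by blast
qed

lemma is_profile_profile_copies:
  assumes "0 < k" and R: "is_profile A R"
  shows "is_profile A (profile_copies k R)"
proof -
  obtain i where "i \<in> dom R"
    using R unfolding is_profile_def by blast
  then have "i * k \<in> dom (profile_copies k R)"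
    using assms(1) by (simp add: dom_profile_copies)
  moreover have "finite (dom (profile_copies k R))"
    using assms finite_dom_profile_copies unfolding is_profile_def by blast
  moreover have "0 \<notin> dom (profile_copies k R)"
    using R unfolding is_profile_def dom_profile_copies by simp
  moreover have "strict_total_order A (the (profile_copies k R j))"
    if "j \<in> dom (profile_copies k R)" for j
    using R that unfolding is_profile_def dom_profile_copies profile_copies_def by blast
  ultimately show ?thesis
    unfolding is_profile_def by blast
qed

lemma copies_profile_copies:
  assumes "0 < k"
  shows "copies k R (profile_copies k R)"
  unfolding copies_def
proof (intro exI[of _ "\<lambda>j. j div k"] conjI ballI)
  fix i assume "i \<in> dom R"
  then have "{j \<in> dom (profile_copies k R). j div k = i} = {j. j div k = i}"
    by (auto simp: dom_profile_copies)
  then show "card {j \<in> dom (profile_copies k R). j div k = i} = k"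
    using card_div_eq[OF assms] by simp
qed (auto simp: profile_copies_def)

lemma margin_profile_copies:
  assumes "0 < k" and "finite (dom R)"
  shows "margin (profile_copies k R) a b = int k * margin R a b"
proof -
  let ?S = "dom (profile_copies k R)" and ?m = "\<lambda>i. ballot_margin (the (R i)) a b"
  have fin: "finite ?S"
    using finite_dom_profile_copies[OF assms] .
  have "margin (profile_copies k R) a b = (\<Sum>j\<in>?S. ?m (j div k))"
    using fin by (simp add: margin_eq_sum profile_copies_def)
  also have "\<dots> = (\<Sum>i\<in>dom R. \<Sum>j | j \<in> ?S \<and> j div k = i. ?m (j div k))"
    using fin assms(2) by (intro sum.group[symmetric]) (auto simp: dom_profile_copies)
  also have "\<dots> = (\<Sum>i\<in>dom R. int k * ?m i)"
  proof (rule sum.cong[OF refl])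
    fix i assume "i \<in> dom R"
    then have "{j. j \<in> ?S \<and> j div k = i} = {j. j div k = i}"
      by (auto simp: dom_profile_copies)
    then show "(\<Sum>j | j \<in> ?S \<and> j div k = i. ?m (j div k)) = int k * ?m i"
      using card_div_eq[OF assms(1)] by simp
  qed
  finally show ?thesis
    using assms(2) by (simp add: margin_eq_sum sum_distrib_left)
qed

section \<open>Rearranging ballots\<close>

lemma strict_total_order_asym: "strict_total_order A r \<Longrightarrow> (a, b) \<in> r \<Longrightarrow> (b, a) \<notin> r"
  unfolding strict_total_order_def irrefl_def trans_def by blast

lemma strict_total_order_converse: "strict_total_order A r \<Longrightarrow> strict_total_order A (r\<inverse>)"
  unfolding strict_total_order_def irrefl_def trans_def by blast

lemma ballot_margin_strict_total_order:
  assumes "strict_total_order A r" "a \<in> A" "b \<in> A" "a \<noteq> b"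
  shows "ballot_margin r a b = (if (a, b) \<in> r then 1 else -1)"
  using assms strict_total_order_asym[OF assms(1)]
  unfolding ballot_margin_def strict_total_order_def by auto

lemma ballot_margin_trivial:
  assumes "strict_total_order A r" "\<not> (a \<in> A \<and> b \<in> A \<and> a \<noteq> b)"
  shows "ballot_margin r a b = 0"
  using assms unfolding ballot_margin_def strict_total_order_def irrefl_def by auto

lemma list_margin_trivial:
  assumes "\<forall>r\<in>set rs. strict_total_order A r" "\<not> (a \<in> A \<and> b \<in> A \<and> a \<noteq> b)"
  shows "list_margin rs a b = 0"
  using assms by (induction rs) (auto simp: ballot_margin_trivial)

lemma list_margin_parity:
  assumes "\<forall>r\<in>set rs. strict_total_order A r" "a \<in> A" "b \<in> A" "a \<noteq> b"
  shows "even (list_margin rs a b + int (length rs))" and "list_margin rs a b \<le> int (length rs)"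
  using assms by (induction rs) (auto simp: ballot_margin_strict_total_order split: if_splits)

lemma parity_split:
  fixes w :: int and n :: nat
  assumes "0 < w" "w \<le> int n" "even (w + int n)"
  shows "\<exists>j. w = int (2 - n mod 2) + 2 * int j \<and> j \<le> (n - (2 - n mod 2)) div 2"
    and "n = (2 - n mod 2) + 2 * ((n - (2 - n mod 2)) div 2)"
  using assms by presburger+

definition stratify :: "('a \<Rightarrow> nat) \<Rightarrow> ('a \<times> 'a) set \<Rightarrow> ('a \<times> 'a) set" where
  "stratify lev r = {(a, b). (a, b) \<in> r \<union> r\<inverse> \<and> (lev a < lev b \<or> lev a = lev b \<and> (a, b) \<in> r)}"

lemma strict_total_order_stratify:
  assumes r: "strict_total_order A r"
  shows "strict_total_order A (stratify lev r)"
proof -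
  have sub: "r \<subseteq> A \<times> A" and tr: "trans r"
    and total: "\<forall>a\<in>A. \<forall>b\<in>A. a \<noteq> b \<longrightarrow> (a, b) \<in> r \<or> (b, a) \<in> r"
    using r unfolding strict_total_order_def by auto
  have "trans (stratify lev r)"
  proof (rule transI)
    fix a b c assume ab: "(a, b) \<in> stratify lev r" and bc: "(b, c) \<in> stratify lev r"
    then have levels: "lev a \<le> lev b" "lev b \<le> lev c" and "a \<in> A" "c \<in> A"
      using sub unfolding stratify_def by auto
    have "a \<noteq> c"
    proof
      assume "a = c"
      then have "(a, b) \<in> r" "(b, a) \<in> r"
        using ab bc levels unfolding stratify_def by auto
      then show False
        using strict_total_order_asym[OF r] by blast
    qed
    then have "(a, c) \<in> r \<union> r\<inverse>"
      using total \<open>a \<in> A\<close> \<open>c \<in> A\<close> by blast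
    moreover have "lev a < lev c \<or> lev a = lev c \<and> (a, c) \<in> r"
      using ab bc levels transD[OF tr, of a b c] unfolding stratify_def by auto
    ultimately show "(a, c) \<in> stratify lev r"
      unfolding stratify_def by blast
  qed
  then show ?thesis
    using r unfolding stratify_def strict_total_order_def irrefl_def by auto
qed

lemma ballot_margin_stratify:
  assumes "strict_total_order A r" "a \<in> A" "b \<in> A" "a \<noteq> b"
  shows "ballot_margin (stratify lev r) a b =
    (if lev a < lev b then 1 else if lev b < lev a then -1 else ballot_margin r a b)"
  using assms ballot_margin_strict_total_order[OF assms]
    ballot_margin_strict_total_order[OF strict_total_order_stratify[OF assms(1)] assms(2-4)]
  unfolding stratify_def strict_total_order_def by auto

definition ranks_top :: "'a set \<Rightarrow> 'a \<Rightarrow> ('a \<times> 'a) set \<Rightarrow> bool" where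
  "ranks_top A x r \<longleftrightarrow> (\<forall>z\<in>A - {x}. (x, z) \<in> r)"

definition ranks_bottom :: "'a set \<Rightarrow> 'a \<Rightarrow> ('a \<times> 'a) set \<Rightarrow> bool" where
  "ranks_bottom A x r \<longleftrightarrow> (\<forall>z\<in>A - {x}. (z, x) \<in> r)"

definition harmless_change ::
    "'a set \<Rightarrow> 'a \<Rightarrow> ('a \<times> 'a) set \<Rightarrow> ('a \<times> 'a) set \<Rightarrow> bool" where
  "harmless_change A x r r' \<longleftrightarrow>
    strict_total_order A r' \<and> (ranks_bottom A x r \<or> ranks_top A x r')"

definition sink :: "'a \<Rightarrow> ('a \<times> 'a) set \<Rightarrow> ('a \<times> 'a) set" where
  "sink x = stratify (\<lambda>a. if a = x then 1 else 0)"

definition block_under :: "'a \<Rightarrow> 'a set \<Rightarrow> ('a \<times> 'a) set \<Rightarrow> ('a \<times> 'a) set" where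
  "block_under x D = stratify (\<lambda>a. if a = x then 2 else if a \<in> D then 1 else 0)"

definition block_over :: "'a \<Rightarrow> 'a set \<Rightarrow> ('a \<times> 'a) set \<Rightarrow> ('a \<times> 'a) set" where
  "block_over x D = stratify (\<lambda>a. if a = x then 1 else if a \<in> D then 2 else 0)"

lemma strict_total_order_sink: "strict_total_order A r \<Longrightarrow> strict_total_order A (sink x r)"
  unfolding sink_def by (rule strict_total_order_stratify)

lemma strict_total_order_block_under:
  "strict_total_order A r \<Longrightarrow> strict_total_order A (block_under x D r)"
  unfolding block_under_def by (rule strict_total_order_stratify)

lemma strict_total_order_block_over:
  "strict_total_order A r \<Longrightarrow> strict_total_order A (block_over x D r)"
  unfolding block_over_def by (rule strict_total_order_stratify)

lemma ranks_bottom_stratify: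
  assumes "strict_total_order A r" "x \<in> A" "\<forall>z\<in>A - {x}. lev z < lev x"
  shows "ranks_bottom A x (stratify lev r)"
  unfolding ranks_bottom_def
proof
  fix z assume z: "z \<in> A - {x}"
  then have "(z, x) \<in> r \<union> r\<inverse>"
    using assms(1,2) unfolding strict_total_order_def by blast
  then show "(z, x) \<in> stratify lev r"
    using assms(3) z unfolding stratify_def by blast
qed

lemma ranks_bottom_sink:
  "strict_total_order A r \<Longrightarrow> x \<in> A \<Longrightarrow> ranks_bottom A x (sink x r)"
  unfolding sink_def by (rule ranks_bottom_stratify) simp_all

lemma ranks_top_converse_sink:
  "strict_total_order A r \<Longrightarrow> x \<in> A \<Longrightarrow> ranks_top A x ((sink x r)\<inverse>)"
  using ranks_bottom_sink[of A r x] unfolding ranks_bottom_def ranks_top_def by simp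

lemma ranks_bottom_block_under:
  "strict_total_order A r \<Longrightarrow> x \<in> A \<Longrightarrow> ranks_bottom A x (block_under x D r)"
  unfolding block_under_def by (rule ranks_bottom_stratify) simp_all

lemma ballot_margin_sink:
  assumes "strict_total_order A r" "a \<noteq> x" "b \<noteq> x"
  shows "ballot_margin (sink x r) a b = ballot_margin r a b"
proof (cases "a \<in> A \<and> b \<in> A \<and> a \<noteq> b")
  case True
  then show ?thesis
    using assms by (simp add: sink_def ballot_margin_stratify)
next
  case False
  then show ?thesis
    using assms ballot_margin_trivial strict_total_order_sink by metis
qed

lemma ballot_margin_sink_bottom:
  assumes "strict_total_order A r" "x \<in> A" "b \<in> A - {x}"
  shows "ballot_margin (sink x r) x b = -1"
  using assms ballot_margin_stratify[OF assms(1,2), of b "\<lambda>a. if a = x then 1 else 0"]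
  by (auto simp: sink_def)

lemma ballot_margin_block_over:
  assumes r: "strict_total_order A r" and "x \<in> A" "D \<subseteq> A - {x}"
  shows "ballot_margin (block_over x D r) a b = ballot_margin (block_under x D r) a b +
    (if a = x \<and> b \<in> D then 2 else if b = x \<and> a \<in> D then -2 else 0)"
proof (cases "a \<in> A \<and> b \<in> A \<and> a \<noteq> b")
  case True
  moreover have "x \<notin> D"
    using assms(3) by blast
  ultimately show ?thesis
    using assms by (simp add: block_over_def block_under_def ballot_margin_stratify)
next
  case False
  then show ?thesis
    using assms ballot_margin_trivial[OF strict_total_order_block_over[OF r]]
      ballot_margin_trivial[OF strict_total_order_block_under[OF r]] by auto
qed

lemma list_margin_map_sink:
  "\<forall>r\<in>set rs. strict_total_order A r \<Longrightarrow> a \<noteq> x \<Longrightarrow> b \<noteq> x \<Longrightarrow>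
    list_margin (map (sink x) rs) a b = list_margin rs a b"
  by (induction rs) (auto simp: ballot_margin_sink)

lemma list_margin_map_sink_bottom:
  "\<forall>r\<in>set rs. strict_total_order A r \<Longrightarrow> x \<in> A \<Longrightarrow> b \<in> A - {x} \<Longrightarrow>
    list_margin (map (sink x) rs) x b = - int (length rs)"
  by (induction rs) (auto simp: ballot_margin_sink_bottom)

definition graft :: "'a \<Rightarrow> ('a \<times> 'a) set list \<Rightarrow> ('a \<times> 'a) set list \<Rightarrow> ('a \<times> 'a) set list" where
  "graft x W rs = W @ map (sink x) rs @ map (\<lambda>r. (sink x r)\<inverse>) W"

lemma ballot_list_graft:
  "ballot_list A W \<Longrightarrow> ballot_list A rs \<Longrightarrow> ballot_list A (graft x W rs)"
  by (auto simp: ballot_list_def graft_def strict_total_order_sink strict_total_order_converse)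

lemma list_margin_graft_row:
  assumes "ballot_list A W" "ballot_list A rs" "length rs = length W" "x \<in> A" "b \<in> A - {x}"
  shows "list_margin (graft x W rs) x b = list_margin W x b"
  using assms list_margin_map_sink_bottom[of W A x b] list_margin_map_sink_bottom[of rs A x b]
  by (simp add: graft_def ballot_list_def)

lemma list_margin_graft_off_row:
  assumes "ballot_list A W" "ballot_list A rs" "a \<noteq> x" "b \<noteq> x"
  shows "list_margin (graft x W rs) a b = list_margin rs a b"
  using assms list_margin_map_sink[of W A a x b] list_margin_map_sink[of rs A a x b]
  by (simp add: graft_def ballot_list_def)

lemma image_map_prod_mem_iff:
  "inj \<pi> \<Longrightarrow> (\<pi> a, \<pi> b) \<in> map_prod \<pi> \<pi> ` r \<longleftrightarrow> (a, b) \<in> r"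
  using inj_image_mem_iff[OF prod.inj_map, of \<pi> \<pi> "(a, b)"] by simp

lemma strict_total_order_map_prod:
  assumes inj: "inj \<pi>" and A: "\<pi> ` A = A" and r: "strict_total_order A r"
  shows "strict_total_order A (map_prod \<pi> \<pi> ` r)"
proof -
  let ?s = "map_prod \<pi> \<pi> ` r"
  have mem: "(\<pi> a, \<pi> b) \<in> ?s \<longleftrightarrow> (a, b) \<in> r" for a b
    using image_map_prod_mem_iff[OF inj] .
  have "?s \<subseteq> A \<times> A"
  proof
    fix p assume "p \<in> ?s"
    then obtain a b where "p = (\<pi> a, \<pi> b)" "(a, b) \<in> r"
      by auto
    then show "p \<in> A \<times> A"
      using r A unfolding strict_total_order_def by blast
  qed
  moreover have "irrefl ?s"
  proof (rule irreflI notI)+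
    fix u assume "(u, u) \<in> ?s"
    then obtain a b where "\<pi> a = \<pi> b" "(a, b) \<in> r"
      by auto
    then show False
      using r injD[OF inj] unfolding strict_total_order_def irrefl_def by metis
  qed
  moreover have "trans ?s"
  proof (rule transI)
    fix u v w assume "(u, v) \<in> ?s" "(v, w) \<in> ?s"
    then obtain a b b' c where "u = \<pi> a" "\<pi> b = \<pi> b'" "w = \<pi> c" "(a, b) \<in> r" "(b', c) \<in> r"
      by auto
    then have "(a, c) \<in> r"
      using r injD[OF inj] unfolding strict_total_order_def by (metis transD)
    then show "(u, w) \<in> ?s"
      using mem \<open>u = \<pi> a\<close> \<open>w = \<pi> c\<close> by blast
  qed
  moreover have "(u, v) \<in> ?s \<or> (v, u) \<in> ?s" if "u \<in> A" "v \<in> A" "u \<noteq> v" for u v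
  proof -
    have "u \<in> \<pi> ` A" "v \<in> \<pi> ` A"
      using that A by simp_all
    then obtain a b where "a \<in> A" "b \<in> A" "u = \<pi> a" "v = \<pi> b"
      by blast
    moreover have "a \<noteq> b"
      using \<open>u \<noteq> v\<close> \<open>u = \<pi> a\<close> \<open>v = \<pi> b\<close> by blast
    ultimately have "(a, b) \<in> r \<or> (b, a) \<in> r"
      using r unfolding strict_total_order_def by blast
    then show ?thesis
      using mem \<open>u = \<pi> a\<close> \<open>v = \<pi> b\<close> by blast
  qed
  ultimately show ?thesis
    unfolding strict_total_order_def by blast
qed

lemma list_margin_map_prod:
  "inj \<pi> \<Longrightarrow> list_margin (map ((`) (map_prod \<pi> \<pi>)) rs) (\<pi> a) (\<pi> b) = list_margin rs a b"
  by (induction rs) (simp_all add: ballot_margin_def image_map_prod_mem_iff)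

lemma prefers_list_profile_map_prod:
  "inj \<pi> \<Longrightarrow> prefers (list_profile (map ((`) (map_prod \<pi> \<pi>)) rs)) i (\<pi> a) (\<pi> b) \<longleftrightarrow>
    prefers (list_profile rs) i a b"
  unfolding prefers_def list_profile_map
  by (cases "list_profile rs i") (auto simp: image_map_prod_mem_iff)

lemma ballot_list_concat_replicate:
  "ballot_list A rs \<Longrightarrow> 0 < k \<Longrightarrow> ballot_list A (concat (replicate k rs))"
  by (cases k) (auto simp: ballot_list_def)

section \<open>Consequences of strategyproofness\<close>

locale pairwise_strategyproof_scc =
  fixes A :: "'a set" and f :: "'a profile \<Rightarrow> 'a set"
  assumes scc: "is_scc A f"
    and pairwise: "pairwise_scc A f"
    and strategyproof: "strategyproof A f"
begin

lemma f_list_profile_cong: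
  assumes "ballot_list A rs" "ballot_list A qs" "\<And>a b. list_margin rs a b = list_margin qs a b"
  shows "f (list_profile rs) = f (list_profile qs)"
  using pairwise assms is_profile_list_profile unfolding pairwise_scc_def
  by (metis ext margin_list_profile)

lemma ex_ballot_list:
  assumes R: "is_profile A R"
  obtains rs where "ballot_list A rs" "f R = f (list_profile rs)"
    "\<And>a b. margin R a b = list_margin rs a b"
proof
  let ?rs = "map (the \<circ> R) (sorted_list_of_set (dom R))"
  show rs: "ballot_list A ?rs"
    using R by (auto simp: is_profile_def ballot_list_def)
  show margin: "margin R a b = list_margin ?rs a b" for a b
    using R by (simp add: is_profile_def margin_eq_list_margin)
  show "f R = f (list_profile ?rs)"
    using pairwise R is_profile_list_profile[OF rs] unfolding pairwise_scc_def
    by (metis ext margin margin_list_profile)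
qed

text \<open>If the choice moved away from \<open>{x}\<close>, a voter ranking \<open>x\<close> last in \<open>r\<close> would gain by
  the change, and one ranking \<open>x\<close> first in \<open>r'\<close> would gain by reverting it.\<close>

lemma deviation_keeps_singleton:
  assumes rs: "ballot_list A (ps @ r # qs)"
    and fx: "f (list_profile (ps @ r # qs)) = {x}" and change: "harmless_change A x r r'"
  shows "f (list_profile (ps @ r' # qs)) = {x}"
proof (rule ccontr)
  let ?R = "list_profile (ps @ r # qs)" and ?R' = "list_profile (ps @ r' # qs)"
  let ?i = "Suc (length ps)"
  assume ne: "f ?R' \<noteq> {x}"
  have rs': "ballot_list A (ps @ r' # qs)"
    using rs change by (auto simp: ballot_list_def harmless_change_def)
  have profiles: "is_profile A ?R" "is_profile A ?R'"
    using rs rs' is_profile_list_profile by blast+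
  have dom: "dom ?R' = dom ?R" "?i \<in> dom ?R"
    by (simp_all add: dom_list_profile)
  have others: "?R' j = ?R j" if "j \<noteq> ?i" for j
  proof -
    have "(ps @ r' # qs) ! n = (ps @ r # qs) ! n" if "n \<noteq> length ps" for n
      using that by (cases "n < length ps") (auto simp: nth_append nth_Cons')
    then show ?thesis
      using that by (auto simp: list_profile_def)
  qed
  have ballot: "prefers ?R ?i u v \<longleftrightarrow> (u, v) \<in> r" "prefers ?R' ?i u v \<longleftrightarrow> (u, v) \<in> r'" for u v
    by (simp_all add: prefers_def list_profile_def dom_list_profile)
  have Y: "f ?R' \<subseteq> A" "f ?R' \<noteq> {}"
    using scc profiles unfolding is_scc_def by auto
  show False
    using change unfolding harmless_change_def
  proof (elim conjE disjE)
    assume "ranks_bottom A x r"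
    then have "fishburn ?R ?i (f ?R') (f ?R)"
      using ne Y(1) unfolding fx fishburn_def ballot ranks_bottom_def by auto
    then show False
      using strategyproof profiles dom others unfolding strategyproof_def by blast
  next
    assume "ranks_top A x r'"
    then have "fishburn ?R' ?i (f ?R) (f ?R')"
      using ne Y unfolding fx fishburn_def ballot ranks_top_def by auto
    then show False
      using strategyproof profiles dom others unfolding strategyproof_def by (metis dom(1))
  qed
qed

lemma deviations_keep_singleton:
  assumes "list_all2 (harmless_change A x) ss ss'"
  shows "ballot_list A (ps @ ss @ qs) \<Longrightarrow> f (list_profile (ps @ ss @ qs)) = {x} \<Longrightarrow>
    f (list_profile (ps @ ss' @ qs)) = {x}"
  using assms
proof (induction ss ss' arbitrary: ps rule: list_all2_induct)
  case (Cons r ss r' ss')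
  have "f (list_profile (ps @ r' # ss @ qs)) = {x}"
    using deviation_keeps_singleton[of ps r "ss @ qs" x r'] Cons by auto
  moreover have "ballot_list A ((ps @ [r']) @ ss @ qs)"
    using Cons by (auto simp: ballot_list_def harmless_change_def)
  ultimately show ?case
    using Cons.IH[of "ps @ [r']"] by simp
qed simp

lemma raise_row:
  assumes x: "x \<in> A" and rs: "ballot_list A rs" and fx: "f (list_profile rs) = {x}"
    and k: "\<forall>z\<in>A - {x}. k z \<le> M"
  obtains qs where "ballot_list A qs" "f (list_profile qs) = {x}" "length qs = length rs + 2 * M"
    "\<And>b. b \<in> A - {x} \<Longrightarrow> list_margin qs x b = list_margin rs x b + 2 * int (k b)"
proof -
  obtain r where "r \<in> set rs"
    using rs unfolding ballot_list_def by fastforce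
  then have r: "strict_total_order A r"
    using rs unfolding ballot_list_def by blast
  \<comment> \<open>In round \<open>l\<close>, \<open>x\<close> is lifted over those \<open>z\<close> that still need to gain, i.e. with \<open>l < k z\<close>.\<close>
  define D where "D l = {z \<in> A - {x}. l < k z}" for l
  have D: "D l \<subseteq> A - {x}" for l
    unfolding D_def by blast
  let ?under = "map (\<lambda>l. block_under x (D l) r) [0..<M]"
  let ?over = "map (\<lambda>l. block_over x (D l) r) [0..<M]"
  let ?rev = "map (\<lambda>l. (block_under x (D l) r)\<inverse>) [0..<M]"
  have ballots: "ballot_list A (rs @ ?under @ ?rev)" "ballot_list A (rs @ ?over @ ?rev)"
    using rs r by (auto simp: ballot_list_def strict_total_order_block_under
        strict_total_order_block_over strict_total_order_converse)
  have "f (list_profile (rs @ ?under @ ?rev)) = {x}"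
    using f_list_profile_cong[OF ballots(1) rs] fx by simp
  moreover have "list_all2 (harmless_change A x) ?under ?over"
    by (rule list_all2_all_nthI)
      (simp_all add: harmless_change_def r x strict_total_order_block_over ranks_bottom_block_under)
  ultimately have "f (list_profile (rs @ ?over @ ?rev)) = {x}"
    using deviations_keep_singleton ballots(1) by blast
  moreover have "list_margin (rs @ ?over @ ?rev) x b = list_margin rs x b + 2 * int (k b)"
    if b: "b \<in> A - {x}" for b
  proof -
    have steps: "(\<Sum>l<N. if l < k b then 2 else (0::int)) = 2 * int (min (k b) N)" for N
      by (induction N) auto
    have "list_margin (?over @ ?rev) x b =
        (\<Sum>l<M. ballot_margin (block_over x (D l) r) x b -
          ballot_margin (block_under x (D l) r) x b)"
      by (simp add: list_margin_map_upt sum_subtractf)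
    also have "\<dots> = (\<Sum>l<M. if l < k b then 2 else 0)"
      using b by (simp add: ballot_margin_block_over[OF r x D]) (auto simp: D_def intro!: sum.cong)
    also have "\<dots> = 2 * int (k b)"
      using steps k b by (simp add: min_def)
    finally show ?thesis
      by simp
  qed
  ultimately show thesis
    using that ballots(2) by simp
qed

lemma graft_keeps_singleton:
  assumes x: "x \<in> A" and W: "ballot_list A W" and rs: "ballot_list A rs"
    and len: "length rs = length W" and fx: "f (list_profile W) = {x}"
  shows "f (list_profile (graft x W rs)) = {x}"
proof -
  let ?rev = "map (\<lambda>r. (sink x r)\<inverse>) W"
  have ballots: "ballot_list A (W @ map (sink x) W @ ?rev)"
    using ballot_list_graft[OF W W] unfolding graft_def .
  have "f (list_profile (W @ map (sink x) W @ ?rev)) = {x}"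
    using f_list_profile_cong[OF ballots W] fx by simp
  moreover have "list_all2 (harmless_change A x) (map (sink x) W) (map (sink x) rs)"
    using W rs len by (intro list_all2_all_nthI)
      (auto simp: harmless_change_def ballot_list_def x strict_total_order_sink ranks_bottom_sink)
  ultimately show ?thesis
    using deviations_keep_singleton ballots unfolding graft_def by blast
qed

lemma singleton_determined_by_row:
  assumes x: "x \<in> A" and W: "ballot_list A W" and fx: "f (list_profile W) = {x}"
    and rs: "ballot_list A rs" and len: "length rs = length W"
    and row: "\<And>b. b \<in> A - {x} \<Longrightarrow> list_margin rs x b = list_margin W x b"
  shows "f (list_profile rs) = {x}"
proof -
  have graft_row: "list_margin (graft x W rs) x b = list_margin rs x b" for b
  proof (cases "b \<in> A - {x}")
    case True
    then show ?thesis
      using list_margin_graft_row[OF W rs len x] row by simp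
  next
    case False
    then show ?thesis
      using list_margin_trivial[of "graft x W rs" A x b] list_margin_trivial[of rs A x b]
        ballot_list_graft[OF W rs] rs
      by (cases "b = x") (auto simp: ballot_list_def)
  qed
  have "list_margin (graft x W rs) a b = list_margin rs a b" for a b
    using graft_row[of b] graft_row[of a] list_margin_graft_off_row[OF W rs]
    by (metis list_margin_commute)
  then have "f (list_profile rs) = f (list_profile (graft x W rs))"
    using f_list_profile_cong[OF rs ballot_list_graft[OF W rs]] by metis
  then show ?thesis
    using graft_keeps_singleton[OF x W rs len fx] by simp
qed

end

locale neutral_pairwise_strategyproof_scc = pairwise_strategyproof_scc +
  assumes non_imposing: "non_imposing A f"
    and homogeneous: "homogeneous A f"
    and neutral: "neutral A f"
begin

lemma f_concat_replicate:
  assumes rs: "ballot_list A rs" and k: "0 < k"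
  shows "f (list_profile (concat (replicate k rs))) = f (list_profile rs)"
proof -
  let ?R = "list_profile rs"
  have R: "is_profile A ?R" and copies: "is_profile A (profile_copies k ?R)"
    using is_profile_list_profile[OF rs] is_profile_profile_copies[OF k] by blast+
  have "f (profile_copies k ?R) = f ?R"
    using homogeneous R copies copies_profile_copies[OF k] k unfolding homogeneous_def
    by (metis One_nat_def Suc_leI)
  moreover have "margin (list_profile (concat (replicate k rs))) = margin (profile_copies k ?R)"
    using R k by (simp add: fun_eq_iff margin_list_profile margin_profile_copies
        list_margin_concat_replicate is_profile_def)
  then have "f (list_profile (concat (replicate k rs))) = f (profile_copies k ?R)"
    using pairwise copies is_profile_list_profile[OF ballot_list_concat_replicate[OF rs k]]
    unfolding pairwise_scc_def by blast
  ultimately show ?thesis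
    by simp
qed

lemma f_unanimous_top:
  assumes x: "x \<in> A" and rs: "ballot_list A rs" and top: "\<forall>r\<in>set rs. ranks_top A x r"
  shows "f (list_profile rs) = {x}"
proof -
  obtain R where R: "is_profile A R" "f R = {x}"
    using non_imposing x unfolding non_imposing_def by blast
  then obtain qs where qs: "ballot_list A qs" "f (list_profile qs) = {x}"
    using ex_ballot_list by metis
  have lengths: "0 < length rs" "0 < length qs"
    using rs qs by (simp_all add: ballot_list_def)
  let ?qs = "concat (replicate (length rs) qs)" and ?rs = "concat (replicate (length qs) rs)"
  have "list_all2 (harmless_change A x) ?qs ?rs"
  proof (rule list_all2_all_nthI)
    show "length ?qs = length ?rs"
      by (simp add: length_concat sum_list_replicate)
    fix n assume "n < length ?qs"
    moreover have "set ?rs = set rs"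
      using lengths(2) by simp
    ultimately have "?rs ! n \<in> set rs"
      using \<open>length ?qs = length ?rs\<close> by (metis nth_mem)
    then show "harmless_change A x (?qs ! n) (?rs ! n)"
      using rs top unfolding ballot_list_def harmless_change_def by blast
  qed
  moreover have "f (list_profile ?qs) = {x}"
    using f_concat_replicate[OF qs(1) lengths(1)] qs(2) by simp
  ultimately have "f (list_profile ?rs) = {x}"
    using deviations_keep_singleton[of _ _ _ "[]" "[]"]
      ballot_list_concat_replicate[OF qs(1) lengths(1)] by simp
  then show ?thesis
    using f_concat_replicate[OF rs lengths(2)] by simp
qed

lemma ex_singleton_with_row:
  assumes x: "x \<in> A" and r: "strict_total_order A r" and c: "0 < c"
    and k: "\<forall>z\<in>A - {x}. k z \<le> m"
  obtains W where "ballot_list A W" "f (list_profile W) = {x}" "length W = c + 2 * m"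
    "\<And>b. b \<in> A - {x} \<Longrightarrow> list_margin W x b = int c + 2 * int (k b)"
proof -
  let ?top = "replicate c ((sink x r)\<inverse>)"
  have top: "ballot_list A ?top" "f (list_profile ?top) = {x}"
    using f_unanimous_top[OF x] ranks_top_converse_sink[OF r x]
      strict_total_order_converse[OF strict_total_order_sink[OF r]] c
    by (auto simp: ballot_list_def)
  have top_row: "list_margin ?top x b = int c" if "b \<in> A - {x}" for b
    using ballot_margin_sink_bottom[OF r x that] by (simp add: list_margin_replicate)
  obtain W where "ballot_list A W" "f (list_profile W) = {x}" "length W = length ?top + 2 * m"
    "\<And>b. b \<in> A - {x} \<Longrightarrow> list_margin W x b = list_margin ?top x b + 2 * int (k b)"
    by (rule raise_row[OF x top k]) (rule that)
  then show thesis
    using that top_row by simp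
qed

lemma f_eq_condorcet_winner:
  assumes x: "x \<in> A" and rs: "ballot_list A rs"
    and wins: "\<And>z. z \<in> A - {x} \<Longrightarrow> 0 < list_margin rs x z"
  shows "f (list_profile rs) = {x}"
proof (cases "A - {x} = {}")
  case True
  have "f (list_profile rs) \<subseteq> A" "f (list_profile rs) \<noteq> {}"
    using scc is_profile_list_profile[OF rs] unfolding is_scc_def by auto
  then show ?thesis
    using True by auto
next
  case False
  then obtain y where y: "y \<in> A - {x}"
    by blast
  have ballots: "\<forall>r\<in>set rs. strict_total_order A r"
    using rs unfolding ballot_list_def by blast
  obtain r where r: "strict_total_order A r"
    using ballots rs hd_in_set unfolding ballot_list_def by blast
  \<comment> \<open>Every margin of \<open>x\<close> has the parity of \<open>n\<close>, so it is \<open>c\<close> plus an even number.\<close>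
  define n where "n = length rs"
  define c where "c = 2 - n mod 2"
  define m where "m = (n - c) div 2"
  have margin_bounds: "0 < list_margin rs x z \<and> list_margin rs x z \<le> int n \<and>
      even (list_margin rs x z + int n)" if "z \<in> A - {x}" for z
    using wins[OF that] list_margin_parity[OF ballots x, of z] that unfolding n_def by auto
  have "\<forall>z\<in>A - {x}. \<exists>j. list_margin rs x z = int c + 2 * int j \<and> j \<le> m"
    using parity_split(1) margin_bounds unfolding c_def m_def by simp
  then obtain k where k: "\<forall>z\<in>A - {x}. list_margin rs x z = int c + 2 * int (k z) \<and> k z \<le> m"
    by (rule bchoice [elim_format]) blast
  have n: "n = c + 2 * m"
    using margin_bounds[OF y] parity_split(2)[of "list_margin rs x y" n]
    unfolding c_def m_def by blast
  have "0 < c" "\<forall>z\<in>A - {x}. k z \<le> m"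
    using k by (auto simp: c_def)
  then obtain W where W: "ballot_list A W" "f (list_profile W) = {x}" "length W = c + 2 * m"
    "\<And>b. b \<in> A - {x} \<Longrightarrow> list_margin W x b = int c + 2 * int (k b)"
    by (rule ex_singleton_with_row[OF x r]) (rule that)
  show ?thesis
    using singleton_determined_by_row[OF x W(1,2) rs] W(3,4) n k unfolding n_def by simp
qed

lemma tie_excludes_singleton:
  assumes x: "x \<in> A" and y: "y \<in> A - {x}" and Y: "ballot_list A Y"
    and fx: "f (list_profile Y) = {x}" and tie: "list_margin Y x y = 0"
  shows False
proof -
  define \<tau> where "\<tau> = Transposition.transpose x y"
  define permute where "permute = map ((`) (map_prod \<tau> \<tau>))"
  have \<tau>: "inj \<tau>" "\<tau> ` A = A" "bij_betw \<tau> A A" "\<tau> x = y" "\<tau> y = x"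
    using x y by (simp_all add: \<tau>_def)
  have ballots_permute: "ballot_list A (permute qs)" if "ballot_list A qs" for qs
    using that strict_total_order_map_prod[OF \<tau>(1,2)] by (auto simp: ballot_list_def permute_def)
  have margin_permute: "list_margin (permute qs) a b = list_margin qs (\<tau> a) (\<tau> b)" for qs a b
    using list_margin_map_prod[OF \<tau>(1), of qs "\<tau> a" "\<tau> b"] by (simp add: permute_def \<tau>_def)
  let ?Z = "graft x Y (permute Y)"
  have Z: "ballot_list A ?Z" "f (list_profile ?Z) = {x}"
    using ballot_list_graft[OF Y ballots_permute[OF Y]]
      graft_keeps_singleton[OF x Y ballots_permute[OF Y] _ fx]
    by (simp_all add: permute_def)
  \<comment> \<open>Since \<open>Y\<close> ties \<open>x\<close> with \<open>y\<close>, transposing them leaves the row of \<open>x\<close> in \<open>?Z\<close> unchanged.\<close>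
  have "list_margin (permute ?Z) x b = list_margin ?Z x b" if b: "b \<in> A - {x}" for b
  proof (cases "b = y")
    case True
    then show ?thesis
      using list_margin_graft_row[OF Y ballots_permute[OF Y] _ x y] tie
        list_margin_commute[of ?Z x y] margin_permute[of ?Z x y] \<tau>
      by (simp add: permute_def)
  next
    case False
    then have "\<tau> b = b"
      using b by (simp add: \<tau>_def)
    then show ?thesis
      using list_margin_graft_row[OF Y ballots_permute[OF Y] _ x b]
        list_margin_graft_off_row[OF Y ballots_permute[OF Y], of y x b]
        margin_permute[of ?Z x b] margin_permute[of Y y b] y b False \<tau>
      by (simp add: permute_def)
  qed
  then have "f (list_profile (permute ?Z)) = {x}"
    using singleton_determined_by_row[OF x Z ballots_permute[OF Z(1)]] by (simp add: permute_def)
  moreover have "f (list_profile (permute ?Z)) = \<tau> ` f (list_profile ?Z)"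
    using neutral is_profile_list_profile[OF Z(1)]
      is_profile_list_profile[OF ballots_permute[OF Z(1)]]
      \<tau>(3) prefers_list_profile_map_prod[OF \<tau>(1)]
    unfolding neutral_def permute_def by (simp add: dom_list_profile)
  ultimately show False
    using Z(2) \<tau> y by simp
qed

lemma margin_pos_if_f_eq_singleton:
  assumes x: "x \<in> A" and rs: "ballot_list A rs" and fx: "f (list_profile rs) = {x}"
    and y: "y \<in> A - {x}"
  shows "0 < list_margin rs x y"
proof (rule ccontr)
  assume nonpos: "\<not> 0 < list_margin rs x y"
  let ?rs2 = "concat (replicate 2 rs)"
  have rs2: "ballot_list A ?rs2" "f (list_profile ?rs2) = {x}"
    using ballot_list_concat_replicate[OF rs] f_concat_replicate[OF rs] fx by simp_all
  define M where "M = nat (- list_margin rs x y)"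
  have "\<forall>z\<in>A - {x}. (if z = y then M else 0) \<le> M"
    by simp
  then obtain Y where Y: "ballot_list A Y" "f (list_profile Y) = {x}"
    "\<And>b. b \<in> A - {x} \<Longrightarrow>
      list_margin Y x b = list_margin ?rs2 x b + 2 * int (if b = y then M else 0)"
    by (rule raise_row[OF x rs2]) (rule that)
  have "list_margin Y x y = 0"
    using Y(3)[OF y] nonpos by (simp add: M_def list_margin_concat_replicate)
  then show False
    using tie_excludes_singleton[OF x y Y(1,2)] by blast
qed

end

theorem lemma12:
  fixes A :: "'a set" and f :: "'a profile \<Rightarrow> 'a set"
  assumes "finite A"
    and "is_scc A f"
    and "pairwise_scc A f"
    and "strategyproof A f"
    and "non_imposing A f"
    and "homogeneous A f"
    and "neutral A f"
  shows "strongly_condorcet_consistent A f"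
proof -
  interpret neutral_pairwise_strategyproof_scc A f
    using assms(2-7) by unfold_locales
  show ?thesis
    unfolding strongly_condorcet_consistent_def
  proof (intro allI impI)
    fix R x assume R: "is_profile A R"
    obtain rs where rs: "ballot_list A rs" "f R = f (list_profile rs)"
      "\<And>a b. margin R a b = list_margin rs a b"
      by (rule ex_ballot_list[OF R]) (rule that)
    show "f R = {x} \<longleftrightarrow> condorcet_winner A R x"
    proof
      assume fx: "f R = {x}"
      then have "x \<in> A"
        using scc R unfolding is_scc_def by blast
      then show "condorcet_winner A R x"
        using margin_pos_if_f_eq_singleton[OF _ rs(1)] fx rs unfolding condorcet_winner_def by auto
    next
      assume "condorcet_winner A R x"
      then show "f R = {x}"
        using f_eq_condorcet_winner[OF _ rs(1)] rs unfolding condorcet_winner_def by auto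
    qed
  qed
qed

end
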